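(* Let $\mathfrak{n}=\mathfrak{v}\oplus\mathfrak{z}$ be a fat (non-singular) 2-step nilpotent real Lie algebra with center $\mathfrak{z}$, and let $G(\mathfrak{n})$ be its group of graded automorphisms $\begin{pmatrix} a&0\\0&b\end{pmatrix}$, $a\in SL(\mathfrak{v})$, $b\in GL(\mathfrak{z})$, $b([u,v])=[au,av]$ for all $u,v\in\mathfrak{v}$. Then there is a positive definite inner product on $\mathfrak{z}$ that is invariant under (the action on $\mathfrak{z}$ of) $G(\mathfrak{n})$, i.e. every $b$ occurring in an element of $G(\mathfrak{n})$ is orthogonal for it.
   Context: A 2-step nilpotent real Lie algebra $\mathfrak{n}$ with center $\mathfrak{z}$ is written $\mathfrak{n}=\mathfrak{v}\oplus\mathfrak{z}$ with $\mathfrak{v}\cong\mathfrak{n}/\mathfrak{z}$; its structure is encoded by an antisymmetric bilinear map $[\ ,\ ]:\mathfrak{v}\times\mathfrak{v}\to\mathfrak{z}$. It is called fat (non-singular) if for every nonzero $\lambda\in\mathfrak{z}^*$ the 2-form $(u,v)\mapsto\lambda([u,v])$ on $\mathfrak{v}$ is non-degenerate (equivalently, $\operatorname{ad}x:\mathfrak{n}\to\mathfrak{z}$ is onto for every $x\notin\mathfrak{z}$). *)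

theory Defs
  imports "HOL-Analysis.Analysis"
begin

text \<open>A 2-step nilpotent real Lie algebra n = v + z, with v = real^'n and
  z = real^'m, is encoded by its bracket B : v x v -> z (bilinear, antisymmetric).\<close>

definition two_step_bracket :: "(real^'n \<Rightarrow> real^'n \<Rightarrow> real^'m) \<Rightarrow> bool" where
  "two_step_bracket B \<longleftrightarrow> bilinear B \<and> (\<forall>u v. B u v = - B v u)"

definition fat :: "(real^'n \<Rightarrow> real^'n \<Rightarrow> real^'m) \<Rightarrow> bool" where
  "fat B \<longleftrightarrow> (\<forall>l :: real^'m \<Rightarrow> real. linear l \<and> l \<noteq> (\<lambda>_. 0) \<longrightarrow>
      (\<forall>u. (\<forall>v. l (B u v) = 0) \<longrightarrow> u = 0))"

definition graded_aut :: "(real^'n \<Rightarrow> real^'n \<Rightarrow> real^'m) \<Rightarrow>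
    (real^'n \<Rightarrow> real^'n) \<Rightarrow> (real^'m \<Rightarrow> real^'m) \<Rightarrow> bool" where
  "graded_aut B a b \<longleftrightarrow> linear a \<and> det (matrix a) = 1 \<and> linear b \<and> bij b \<and>
      (\<forall>u v. b (B u v) = B (a u) (a v))"

definition pos_def_inner :: "(real^'m \<Rightarrow> real^'m \<Rightarrow> real) \<Rightarrow> bool" where
  "pos_def_inner Q \<longleftrightarrow> bilinear Q \<and> (\<forall>x y. Q x y = Q y x) \<and> (\<forall>x. x \<noteq> 0 \<longrightarrow> Q x x > 0)"

end

theory Submission
  imports Defs
begin

text \<open>For a functional l on the centre let F l be the absolute determinant of the Gram matrix
  of the 2-form l \<circ> [-,-] on v. Fatness makes F positive away from 0, F is homogeneous of
  degree dim v, and since det a = 1 it is invariant under the transposes of the graded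
  automorphisms b. Hence K = {F \<le> 1} is a compact neighbourhood of 0 that every transpose
  maps onto itself; such a transpose preserves the volume of K, hence has determinant \<plusminus>1,
  and the second moment Q x y = integral over K of (x \<bullet> \<xi>) (y \<bullet> \<xi>) d\<xi> is an invariant inner product.\<close>

section \<open>Homogeneous sublevel sets\<close>

lemma bounded_sublevel_homogeneous:
  fixes F :: "'a::euclidean_space \<Rightarrow> real"
  assumes cont: "continuous_on UNIV F" and hom: "\<And>t x. F (t *\<^sub>R x) = \<bar>t\<bar> ^ k * F x"
    and "k \<ge> 1" and pos: "\<And>x. x \<noteq> 0 \<Longrightarrow> 0 < F x"
  shows "bounded {x. F x \<le> 1}"
proof -
  have "(SOME i. i \<in> Basis) \<in> sphere (0::'a) 1"
    by (simp add: norm_Basis SOME_Basis)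
  then obtain x0 where "x0 \<in> sphere 0 1" "\<forall>y\<in>sphere 0 1. F x0 \<le> F y"
    using continuous_attains_inf[OF compact_sphere _ continuous_on_subset[OF cont]] by blast
  then have x0: "norm x0 = 1" and min: "\<And>y. norm y = 1 \<Longrightarrow> F x0 \<le> F y"
    by auto
  define m where "m = F x0"
  have "0 < m"
    using pos[of x0] x0 by (metis m_def norm_zero zero_neq_one)
  have "norm x \<le> max 1 (1 / m)" if "F x \<le> 1" for x
  proof (cases "norm x \<le> 1")
    case False
    then have "x \<noteq> 0" by auto
    have "norm x ^ k * m \<le> norm x ^ k * F (x /\<^sub>R norm x)"
      using min[of "x /\<^sub>R norm x"] \<open>x \<noteq> 0\<close> by (simp add: m_def)
    also have "\<dots> = F x"
      using hom[of "norm x" "x /\<^sub>R norm x"] \<open>x \<noteq> 0\<close> by simp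
    finally have "norm x ^ k * m \<le> 1"
      using that by linarith
    moreover have "norm x \<le> norm x ^ k"
      using power_increasing[of 1 k "norm x"] False \<open>k \<ge> 1\<close> by simp
    ultimately have "norm x * m \<le> 1"
      using mult_right_mono[of "norm x" "norm x ^ k" m] \<open>0 < m\<close> by linarith
    then show ?thesis
      using \<open>0 < m\<close> by (simp add: le_max_iff_disj pos_le_divide_eq)
  qed simp
  then show ?thesis
    unfolding bounded_iff by blast
qed

lemma compact_sublevel_homogeneous:
  fixes F :: "'a::euclidean_space \<Rightarrow> real"
  assumes "continuous_on UNIV F" "\<And>t x. F (t *\<^sub>R x) = \<bar>t\<bar> ^ k * F x"
    and "k \<ge> 1" "\<And>x. x \<noteq> 0 \<Longrightarrow> 0 < F x"
  shows "compact {x. F x \<le> 1}"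
  using bounded_sublevel_homogeneous[OF assms] closed_Collect_le[OF assms(1) continuous_on_const]
  by (simp add: compact_eq_bounded_closed)

lemma zero_in_interior_sublevel_homogeneous:
  fixes F :: "'a::euclidean_space \<Rightarrow> real"
  assumes "continuous_on UNIV F" "\<And>t x. F (t *\<^sub>R x) = \<bar>t\<bar> ^ k * F x" "k \<ge> 1"
  shows "0 \<in> interior {x. F x \<le> 1}"
proof -
  have "F 0 = 0"
    using assms(2)[of 0 0] assms(3) by (cases k) auto
  moreover have "open {x. F x < 1}"
    by (intro open_Collect_less assms(1) continuous_on_const)
  ultimately have "0 \<in> interior {x. F x < 1}"
    by (simp add: interior_open)
  moreover have "{x. F x < 1} \<subseteq> {x. F x \<le> 1}"
    by auto
  ultimately show ?thesis
    using interior_mono by blast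
qed

section \<open>Second moments of a compact body\<close>

lemma absolutely_integrable_on_compact:
  fixes f :: "'a::euclidean_space \<Rightarrow> 'b::euclidean_space"
  assumes "compact S" "continuous_on S f"
  shows "f absolutely_integrable_on S"
  using borel_integrable_compact[OF assms]
  by (simp add: set_integrable_def integrable_completion borel_measurable_integrable)

lemma integrable_on_compact:
  fixes f :: "'a::euclidean_space \<Rightarrow> 'b::euclidean_space"
  assumes "compact S" "continuous_on S f"
  shows "f integrable_on S"
  using absolutely_integrable_on_compact[OF assms] by (rule set_lebesgue_integral_eq_integral(1))

lemma integral_pos_of_interior_pos:
  fixes h :: "'a::euclidean_space \<Rightarrow> real"
  assumes "compact K" "continuous_on K h" "\<And>x. x \<in> K \<Longrightarrow> 0 \<le> h x"
    and "z \<in> interior K" "0 < h z"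
  shows "0 < integral K h"
proof -
  have "open (interior K \<inter> h -` {h z / 2<..})"
    using continuous_on_subset[OF assms(2) interior_subset] by (intro continuous_open_preimage) auto
  moreover have "z \<in> interior K \<inter> h -` {h z / 2<..}"
    using assms(4,5) by simp
  ultimately obtain a b where ab: "cbox a b \<subseteq> interior K \<inter> h -` {h z / 2<..}"
    and box: "\<forall>i\<in>Basis. a \<bullet> i < b \<bullet> i"
    by (meson open_contains_cbox)
  have "cbox a b \<subseteq> K"
    using ab interior_subset by blast
  then have int_box: "h integrable_on cbox a b"
    by (intro integrable_continuous continuous_on_subset[OF assms(2)])
  have "0 < integral (cbox a b) (\<lambda>_. h z / 2)"
    using content_pos_lt[OF box] assms(5) by simp
  also have "\<dots> \<le> integral (cbox a b) h"
    using ab by (intro integral_le int_box) auto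
  also have "\<dots> \<le> integral K h"
    using \<open>cbox a b \<subseteq> K\<close> assms(3)
    by (intro integral_subset_le int_box integrable_on_compact assms(1,2)) auto
  finally show ?thesis .
qed

definition moment_form :: "'a::euclidean_space set \<Rightarrow> 'a \<Rightarrow> 'a \<Rightarrow> real" where
  "moment_form K x y = integral K (\<lambda>\<xi>. (x \<bullet> \<xi>) * (y \<bullet> \<xi>))"

lemma moment_form_commute: "moment_form K x y = moment_form K y x"
  by (simp add: moment_form_def mult.commute)

lemma linear_moment_form:
  assumes "compact K"
  shows "linear (\<lambda>x. moment_form K x y)"
proof (rule linearI)
  have int: "(\<lambda>\<xi>. (x \<bullet> \<xi>) * (y \<bullet> \<xi>)) integrable_on K" for x
    by (intro integrable_on_compact assms continuous_intros)
  show "moment_form K (x1 + x2) y = moment_form K x1 y + moment_form K x2 y" for x1 x2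
    unfolding moment_form_def inner_add_left distrib_right by (intro integral_add int)
  show "moment_form K (c *\<^sub>R x) y = c *\<^sub>R moment_form K x y" for c x
    by (simp add: moment_form_def mult.assoc)
qed

lemma pos_def_inner_moment_form:
  fixes K :: "(real^'m) set"
  assumes "compact K" "0 \<in> interior K"
  shows "pos_def_inner (moment_form K)"
  unfolding pos_def_inner_def
proof (intro conjI allI impI)
  show "bilinear (moment_form K)"
    unfolding bilinear_def using linear_moment_form[OF assms(1)]
    by (simp add: moment_form_commute[of K] flip: moment_form_commute)
  show "moment_form K x y = moment_form K y x" for x y
    by (rule moment_form_commute)
next
  fix x :: "real^'m"
  assume "x \<noteq> 0"
  obtain r where "0 < r" "ball 0 r \<subseteq> interior K"
    using assms(2) open_contains_ball_eq open_interior by blast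
  define z where "z = (r / (2 * norm x)) *\<^sub>R x"
  have "norm z < r"
    using \<open>0 < r\<close> \<open>x \<noteq> 0\<close> by (simp add: z_def)
  then have "z \<in> interior K"
    using \<open>ball 0 r \<subseteq> interior K\<close> by auto
  moreover have "0 < (x \<bullet> z) * (x \<bullet> z)"
    using \<open>0 < r\<close> \<open>x \<noteq> 0\<close> by (simp add: z_def)
  ultimately show "0 < moment_form K x x"
    unfolding moment_form_def
    by (intro integral_pos_of_interior_pos[OF assms(1)] continuous_intros) auto
qed

text \<open>The library's linear change of variables is stated for vector-valued integrands on a
  wellordered index type; real integrands are passed through \<open>real^1\<close>.\<close>

lemma integral_linear_image:
  fixes c :: "real^'m::{finite,wellorder} \<Rightarrow> real^'m::_" and g :: "real^'m::_ \<Rightarrow> real"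
  assumes "linear c" "compact K" "continuous_on (c ` K) g"
  shows "integral (c ` K) g = \<bar>det (matrix c)\<bar> * integral K (g \<circ> c)"
proof -
  let ?g1 = "\<lambda>\<xi>. g \<xi> *\<^sub>R (1::real^1)"
  have cont_c: "continuous_on S c" for S
    using assms(1) by (simp add: linear_continuous_on linear_conv_bounded_linear)
  have "compact (c ` K)"
    by (intro compact_continuous_image cont_c assms(2))
  then have "?g1 absolutely_integrable_on (c ` K)"
    by (intro absolutely_integrable_on_compact continuous_intros assms(3))
  then have "integral (c ` K) ?g1 = \<bar>det (matrix c)\<bar> *\<^sub>R integral K (?g1 \<circ> c)"
    by (intro integral_change_of_variables_linear assms(1)) simp
  moreover have "g integrable_on c ` K"
    by (rule integrable_on_compact[OF \<open>compact (c ` K)\<close> assms(3)])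
  moreover have "(g \<circ> c) integrable_on K"
    by (intro integrable_on_compact continuous_on_compose cont_c assms(2,3))
  moreover have "integral S (\<lambda>\<xi>. f \<xi> *\<^sub>R (1::real^1)) = integral S f *\<^sub>R 1"
    if "f integrable_on S" for f :: "real^'m::_ \<Rightarrow> real" and S
    by (rule integral_unique[OF has_integral_scaleR_left[OF integrable_integral[OF that]]])
  ultimately show ?thesis
    by (simp add: o_def)
qed

lemma moment_form_adjoint_invariant:
  fixes b :: "real^'m::{finite,wellorder} \<Rightarrow> real^'m::_"
  assumes "linear b" "adjoint b ` K = K" "compact K" "interior K \<noteq> {}"
  shows "moment_form K (b x) (b y) = moment_form K x y"
proof -
  let ?c = "adjoint b"
  have "linear ?c"
    by (rule adjoint_linear[OF assms(1)])
  have image_eq: "integral K h = \<bar>det (matrix ?c)\<bar> * integral K (h \<circ> ?c)" if "continuous_on K h" for h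
    using integral_linear_image[OF \<open>linear ?c\<close> assms(3)] that by (simp add: assms(2))
  obtain z where "z \<in> interior K"
    using assms(4) by blast
  then have "0 < integral K (\<lambda>_. 1::real)"
    by (intro integral_pos_of_interior_pos[OF assms(3)]) auto
  with image_eq[of "\<lambda>_. 1"] have "\<bar>det (matrix ?c)\<bar> = 1"
    by (simp add: o_def)
  then have "moment_form K x y = integral K ((\<lambda>\<xi>. (x \<bullet> \<xi>) * (y \<bullet> \<xi>)) \<circ> ?c)"
    using image_eq[of "\<lambda>\<xi>. (x \<bullet> \<xi>) * (y \<bullet> \<xi>)"] by (simp add: moment_form_def continuous_intros)
  also have "\<dots> = moment_form K (b x) (b y)"
    by (simp add: moment_form_def o_def adjoint_works[OF assms(1)])
  finally show ?thesis ..
qed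

section \<open>The Gram matrix of the bracket\<close>

lemma bilinear_compose_linear:
  assumes "bilinear B" "linear g"
  shows "bilinear (\<lambda>u v. g (B u v))"
  unfolding bilinear_def
proof (intro conjI allI)
  fix u v
  show "linear (\<lambda>v. g (B u v))" "linear (\<lambda>u. g (B u v))"
    using assms linear_compose[OF _ assms(2)] by (auto simp: bilinear_def o_def)
qed

definition bracket_matrix :: "(real^'n \<Rightarrow> real^'n \<Rightarrow> real^'m) \<Rightarrow> real^'m \<Rightarrow> real^'n^'n" where
  "bracket_matrix B l = (\<chi> i j. l \<bullet> B (axis i 1) (axis j 1))"

lemma inner_bracket_matrix:
  assumes "bilinear B"
  shows "l \<bullet> B u v = u \<bullet> (bracket_matrix B l *v v)"
proof -
  have "bilinear (\<lambda>u v. u \<bullet> (bracket_matrix B l *v v))"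
    unfolding bilinear_def
    by (auto intro!: linearI simp: inner_add_left inner_add_right matrix_vector_right_distrib
        matrix_vector_mult_scaleR)
  moreover have "l \<bullet> B i j = i \<bullet> (bracket_matrix B l *v j)" if "i \<in> Basis" "j \<in> Basis" for i j
    using axis_inverse[OF that(1)] axis_inverse[OF that(2)]
    by (auto simp: bracket_matrix_def matrix_vector_mult_basis column_def inner_axis')
  ultimately have "(\<lambda>u v. l \<bullet> B u v) = (\<lambda>u v. u \<bullet> (bracket_matrix B l *v v))"
    by (intro bilinear_eq_stdbasis bilinear_compose_linear[OF assms]
        bounded_linear.linear[OF bounded_linear_inner_right])
  then show ?thesis
    by (simp add: fun_eq_iff)
qed

lemma matrix_eq_inner:
  fixes M N :: "real^'n^'n"
  assumes "\<And>u v. u \<bullet> (M *v v) = u \<bullet> (N *v v)"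
  shows "M = N"
  using assms vector_eq_ldot by (metis matrix_eq)

lemma bracket_matrix_eqI:
  assumes "bilinear B" "\<And>u v. l \<bullet> B u v = u \<bullet> (M *v v)"
  shows "bracket_matrix B l = M"
  using inner_bracket_matrix[OF assms(1), of l] assms(2) by (metis matrix_eq_inner)

lemma bracket_matrix_scaleR:
  assumes "bilinear B"
  shows "bracket_matrix B (t *\<^sub>R l) = t *\<^sub>R bracket_matrix B l"
proof (rule bracket_matrix_eqI[OF assms])
  fix u v
  have "(t *\<^sub>R l) \<bullet> B u v = t * (u \<bullet> (bracket_matrix B l *v v))"
    by (simp only: inner_scaleR_left inner_bracket_matrix[OF assms, of l])
  then show "(t *\<^sub>R l) \<bullet> B u v = u \<bullet> (t *\<^sub>R bracket_matrix B l *v v)"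
    by (simp add: scaleR_matrix_vector_assoc[symmetric])
qed

lemma bracket_matrix_adjoint:
  assumes "bilinear B" and aut: "graded_aut B a b"
  shows "bracket_matrix B (adjoint b l) = transpose (matrix a) ** bracket_matrix B l ** matrix a"
proof (rule bracket_matrix_eqI[OF assms(1)])
  have "linear a" "linear b" and hom: "\<And>u v. b (B u v) = B (a u) (a v)"
    using aut by (auto simp: graded_aut_def)
  let ?A = "matrix a"
  have a_eq: "a w = ?A *v w" for w
    using matrix_works[OF \<open>linear a\<close>[folded linear_matrix_vector_mul_eq]] by simp
  fix u v
  have "adjoint b l \<bullet> B u v = l \<bullet> B (a u) (a v)"
    using adjoint_works[OF \<open>linear b\<close>] by (simp add: inner_commute hom)
  also have "\<dots> = (?A *v u) \<bullet> (bracket_matrix B l *v (?A *v v))"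
    by (simp add: inner_bracket_matrix[OF assms(1)] a_eq)
  also have "\<dots> = u \<bullet> ((transpose ?A ** bracket_matrix B l ** ?A) *v v)"
    by (metis inner_commute dot_lmul_matrix transpose_matrix_vector matrix_vector_mul_assoc)
  finally show "adjoint b l \<bullet> B u v = u \<bullet> ((transpose ?A ** bracket_matrix B l ** ?A) *v v)" .
qed

lemma det_scaleR: "det (c *\<^sub>R (A::real^'n^'n)) = c ^ CARD('n) * det A"
  unfolding det_def by (simp add: prod.distrib sum_distrib_left mult_ac)

definition abs_det_bracket :: "(real^'n \<Rightarrow> real^'n \<Rightarrow> real^'m) \<Rightarrow> real^'m \<Rightarrow> real" where
  "abs_det_bracket B l = \<bar>det (bracket_matrix B l)\<bar>"

lemma continuous_on_abs_det_bracket: "continuous_on S (abs_det_bracket B)"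
  unfolding abs_det_bracket_def[abs_def] det_def bracket_matrix_def
  by (simp only: vec_lambda_beta) (intro continuous_intros)

lemma abs_det_bracket_scaleR:
  assumes "bilinear B"
  shows "abs_det_bracket B (t *\<^sub>R l) = \<bar>t\<bar> ^ CARD('n) * abs_det_bracket (B :: real^'n \<Rightarrow> _) l"
  by (simp add: abs_det_bracket_def bracket_matrix_scaleR[OF assms] det_scaleR abs_mult power_abs)

lemma abs_det_bracket_adjoint:
  assumes "bilinear B" "graded_aut B a b"
  shows "abs_det_bracket B (adjoint b l) = abs_det_bracket B l"
  using assms(2) by (simp add: abs_det_bracket_def bracket_matrix_adjoint[OF assms] det_mul graded_aut_def)

lemma fatD:
  fixes l :: "real^'m \<Rightarrow> real" and B :: "real^'n \<Rightarrow> real^'n \<Rightarrow> real^'m"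
  assumes "fat B" "linear l" "l \<noteq> (\<lambda>_. 0)" "\<And>v. l (B u v) = 0"
  shows "u = 0"
  using assms unfolding fat_def by blast

lemma abs_det_bracket_pos:
  assumes "two_step_bracket B" "fat B" "l \<noteq> 0"
  shows "0 < abs_det_bracket B l"
proof (rule ccontr)
  have bil: "bilinear B" and anti: "\<And>u v. B u v = - B v u"
    using assms(1) unfolding two_step_bracket_def by blast+
  let ?M = "bracket_matrix B l"
  assume "\<not> 0 < abs_det_bracket B l"
  then have "\<not> inj ((*v) ?M)"
    using det_nz_iff_inj[OF matrix_vector_mul_linear, of ?M] by (simp add: abs_det_bracket_def)
  then obtain z where "z \<noteq> 0" "?M *v z = 0"
    using linear_injective_0[OF matrix_vector_mul_linear] by blast
  then have "l \<bullet> B z v = 0" for v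
    using inner_bracket_matrix[OF bil, of l v z] anti[of z v] by simp
  moreover have "(\<bullet>) l \<noteq> (\<lambda>_. 0)"
  proof
    assume "(\<bullet>) l = (\<lambda>_. 0)"
    from fun_cong[OF this, of l] have "l \<bullet> l = 0"
      by simp
    with assms(3) show False
      by simp
  qed
  ultimately have "z = 0"
    by (intro fatD[OF assms(2) bounded_linear.linear[OF bounded_linear_inner_right]])
  with \<open>z \<noteq> 0\<close> show False ..
qed

section \<open>Invariant inner products\<close>

definition has_invariant_inner :: "(real^'n \<Rightarrow> real^'n \<Rightarrow> real^'m) \<Rightarrow> bool" where
  "has_invariant_inner B \<longleftrightarrow>
    (\<exists>Q. pos_def_inner Q \<and> (\<forall>a b. graded_aut B a b \<longrightarrow> (\<forall>x y. Q (b x) (b y) = Q x y)))"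

lemma adjoint_image_sublevel_abs_det_bracket:
  assumes "bilinear B" "graded_aut B a b"
  shows "adjoint b ` {l. abs_det_bracket B l \<le> t} = {l. abs_det_bracket B l \<le> t}"
proof -
  have "linear b" "bij b"
    using assms(2) unfolding graded_aut_def by blast+
  then have "surj (adjoint b)"
    by (simp add: bij_is_inj)
  then show ?thesis
    using abs_det_bracket_adjoint[OF assms] by (auto simp: image_iff) (metis surjD)
qed

lemma has_invariant_inner_wellorder:
  fixes B :: "real^'n \<Rightarrow> real^'n \<Rightarrow> real^'m::{finite,wellorder}"
  assumes "two_step_bracket B" "fat B"
  shows "has_invariant_inner B"
proof -
  have bil: "bilinear B"
    using assms(1) by (simp add: two_step_bracket_def)
  define K where "K = {l. abs_det_bracket B l \<le> 1}"
  have hom: "abs_det_bracket B (t *\<^sub>R l) = \<bar>t\<bar> ^ CARD('n) * abs_det_bracket B l" for t l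
    by (rule abs_det_bracket_scaleR[OF bil])
  have "compact K"
    unfolding K_def using abs_det_bracket_pos[OF assms]
    by (intro compact_sublevel_homogeneous[OF continuous_on_abs_det_bracket hom]) auto
  moreover have "0 \<in> interior K"
    unfolding K_def by (intro zero_in_interior_sublevel_homogeneous[OF continuous_on_abs_det_bracket hom]) auto
  moreover have "moment_form K (b x) (b y) = moment_form K x y" if "graded_aut B a b" for a b x y
    using that \<open>compact K\<close> \<open>0 \<in> interior K\<close>
    by (intro moment_form_adjoint_invariant)
      (auto simp: graded_aut_def K_def adjoint_image_sublevel_abs_det_bracket[OF bil that])
  ultimately show ?thesis
    unfolding has_invariant_inner_def by (blast intro: pos_def_inner_moment_form)
qed

lemma two_step_bracket_compose:
  assumes "two_step_bracket B" "linear \<phi>"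
  shows "two_step_bracket (\<lambda>u v. \<phi> (B u v))"
proof -
  have "bilinear B" and anti: "\<And>u v. B u v = - B v u"
    using assms(1) unfolding two_step_bracket_def by blast+
  moreover have "\<phi> (B u v) = - \<phi> (B v u)" for u v
    using anti[of u v] linear_neg[OF assms(2)] by simp
  ultimately show ?thesis
    unfolding two_step_bracket_def using bilinear_compose_linear[OF _ assms(2)] by blast
qed

lemma fat_compose:
  fixes \<phi> :: "real^'m \<Rightarrow> real^'k"
  assumes "fat B" "linear \<phi>" "surj \<phi>"
  shows "fat (\<lambda>u v. \<phi> (B u v))"
  unfolding fat_def
proof (intro allI impI)
  fix l :: "real^'k \<Rightarrow> real" and u
  assume l: "linear l \<and> l \<noteq> (\<lambda>_. 0)" and u: "\<forall>v. l (\<phi> (B u v)) = 0"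
  have "linear (\<lambda>z. l (\<phi> z))"
    using linear_compose[OF assms(2), of l] l by (simp add: o_def)
  moreover have "(\<lambda>z. l (\<phi> z)) \<noteq> (\<lambda>_. 0)"
    using l assms(3) by (auto simp: fun_eq_iff) (metis surjD)
  ultimately show "u = 0"
    using u by (intro fatD[OF assms(1), of "\<lambda>z. l (\<phi> z)"]) auto
qed

lemma pos_def_inner_linear_pullback:
  assumes "pos_def_inner Q" "linear \<phi>" "inj \<phi>"
  shows "pos_def_inner (\<lambda>x y. Q (\<phi> x) (\<phi> y))"
proof -
  have "bilinear Q" and sym: "\<And>x y. Q x y = Q y x" and pos: "\<And>x. x \<noteq> 0 \<Longrightarrow> 0 < Q x x"
    using assms(1) unfolding pos_def_inner_def by blast+
  have "bilinear (\<lambda>x y. Q (\<phi> x) (\<phi> y))"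
    unfolding bilinear_def
  proof (intro conjI allI)
    fix x y
    show "linear (\<lambda>y. Q (\<phi> x) (\<phi> y))" "linear (\<lambda>x. Q (\<phi> x) (\<phi> y))"
      using \<open>bilinear Q\<close> linear_compose[OF assms(2)] by (auto simp: bilinear_def o_def)
  qed
  moreover have "\<phi> x \<noteq> 0" if "x \<noteq> 0" for x
    using that assms(2,3) linear_injective_0 by blast
  ultimately show ?thesis
    unfolding pos_def_inner_def using sym pos by blast
qed

lemma graded_aut_compose:
  assumes "graded_aut B a b" "linear \<phi>" "linear \<psi>" "\<And>x. \<psi> (\<phi> x) = x" "\<And>y. \<phi> (\<psi> y) = y"
  shows "graded_aut (\<lambda>u v. \<phi> (B u v)) a (\<lambda>y. \<phi> (b (\<psi> y)))"
proof -
  have "linear a" "det (matrix a) = 1" "linear b" "bij b" and hom: "\<And>u v. b (B u v) = B (a u) (a v)"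
    using assms(1) unfolding graded_aut_def by blast+
  have "linear (\<lambda>y. \<phi> (b (\<psi> y)))"
    using linear_compose[OF linear_compose[OF assms(3) \<open>linear b\<close>] assms(2)] by (simp add: o_def)
  moreover have "bij \<phi>" "bij \<psi>"
    using assms(4,5) by (metis bijI injI surjI)+
  then have "bij (\<phi> \<circ> b \<circ> \<psi>)"
    using \<open>bij b\<close> by (intro bij_comp)
  ultimately show ?thesis
    unfolding graded_aut_def using \<open>linear a\<close> \<open>det (matrix a) = 1\<close> by (simp add: o_def assms(4) hom)
qed

lemma has_invariant_inner_linear_iso:
  assumes "linear \<phi>" "linear \<psi>" "\<And>x. \<psi> (\<phi> x) = x" "\<And>y. \<phi> (\<psi> y) = y"
    and "has_invariant_inner (\<lambda>u v. \<phi> (B u v))"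
  shows "has_invariant_inner B"
proof -
  obtain Q where Q: "pos_def_inner Q"
    and inv: "\<And>a b x y. graded_aut (\<lambda>u v. \<phi> (B u v)) a b \<Longrightarrow> Q (b x) (b y) = Q x y"
    using assms(5) unfolding has_invariant_inner_def by blast
  have "inj \<phi>"
    by (metis assms(3) injI)
  have "Q (\<phi> (b x)) (\<phi> (b y)) = Q (\<phi> x) (\<phi> y)" if "graded_aut B a b" for a b x y
    using inv[OF graded_aut_compose[OF that assms(1-4)], of "\<phi> x" "\<phi> y"] by (simp add: assms(3))
  then show ?thesis
    unfolding has_invariant_inner_def
    using pos_def_inner_linear_pullback[OF Q assms(1) \<open>inj \<phi>\<close>] by blast
qed

text \<open>A copy of a finite type carrying a wellorder, used to relabel the coordinates of the centre
  so that the change of variables applies.\<close>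

typedef ('a::finite) ord_copy = "{..<CARD('a)}"
  by (rule exI[of _ 0]) simp

instantiation ord_copy :: (finite) wellorder
begin

definition less_eq_ord_copy :: "'a ord_copy \<Rightarrow> 'a ord_copy \<Rightarrow> bool" where
  "x \<le> y \<longleftrightarrow> Rep_ord_copy x \<le> Rep_ord_copy y"

definition less_ord_copy :: "'a ord_copy \<Rightarrow> 'a ord_copy \<Rightarrow> bool" where
  "x < y \<longleftrightarrow> Rep_ord_copy x < Rep_ord_copy y"

instance
proof
  fix P :: "'a ord_copy \<Rightarrow> bool" and a
  assume step: "\<And>x. (\<And>y. y < x \<Longrightarrow> P y) \<Longrightarrow> P x"
  show "P a"
    by (induction "Rep_ord_copy a" arbitrary: a rule: less_induct) (auto intro: step simp: less_ord_copy_def)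
qed (auto simp: less_eq_ord_copy_def less_ord_copy_def Rep_ord_copy_inject)

end

instance ord_copy :: (finite) finite
  by standard (metis type_definition.univ type_definition_ord_copy finite_lessThan finite_imageI)

lemma card_ord_copy: "CARD('a::finite ord_copy) = CARD('a)"
  using type_definition.card[OF type_definition_ord_copy] by simp

lemma vec_reindex_iso:
  assumes "CARD('k::finite) = CARD('m::finite)"
  obtains \<phi> :: "real^'m \<Rightarrow> real^'k" and \<psi>
  where "linear \<phi>" "linear \<psi>" "\<And>x. \<psi> (\<phi> x) = x" "\<And>y. \<phi> (\<psi> y) = y"
proof -
  obtain e :: "'k \<Rightarrow> 'm" where e: "bij e"
    using assms finite_same_card_bij[of "UNIV :: 'k set" "UNIV :: 'm set"] by auto
  let ?\<phi> = "\<lambda>x::real^'m. \<chi> j. x $ e j" and ?\<psi> = "\<lambda>y::real^'k. \<chi> i. y $ inv e i"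
  have "linear ?\<phi>" "linear ?\<psi>"
    by (auto intro!: linearI simp: vec_eq_iff)
  moreover have "?\<psi> (?\<phi> x) = x" "?\<phi> (?\<psi> y) = y" for x y
    using e by (simp_all add: vec_eq_iff bij_is_surj bij_is_inj surj_f_inv_f)
  ultimately show ?thesis
    using that by blast
qed

theorem theorem2p1:
  fixes B :: "real^'n \<Rightarrow> real^'n \<Rightarrow> real^'m"
  assumes "two_step_bracket B" and "fat B"
  shows "\<exists>Q. pos_def_inner Q \<and>
           (\<forall>a b. graded_aut B a b \<longrightarrow> (\<forall>x y. Q (b x) (b y) = Q x y))"
proof -
  obtain \<phi> :: "real^'m \<Rightarrow> real^'m ord_copy" and \<psi>
    where iso: "linear \<phi>" "linear \<psi>" "\<And>x. \<psi> (\<phi> x) = x" "\<And>y. \<phi> (\<psi> y) = y"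
    using vec_reindex_iso[OF card_ord_copy] by blast
  have "surj \<phi>"
    by (metis iso(4) surjI)
  have "has_invariant_inner (\<lambda>u v. \<phi> (B u v))"
    by (rule has_invariant_inner_wellorder[OF two_step_bracket_compose[OF assms(1) iso(1)]
          fat_compose[OF assms(2) iso(1) \<open>surj \<phi>\<close>]])
  then have "has_invariant_inner B"
    by (rule has_invariant_inner_linear_iso[OF iso])
  then show ?thesis
    unfolding has_invariant_inner_def .
qed

end
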